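(* Let $1\le r\le n$ and let $\mathcal{A}$ be a family of $r$-element subsets of $[n]$. Define $m:\mathcal{A}\to\mathbb{R}$ by: $m(A)=n/r$ if $A$ is contained in some matching of $\lfloor n/r\rfloor$ sets from $\mathcal{A}$, and otherwise $m(A)$ is the size of the largest matching of sets from $\mathcal{A}$ that contains $A$. Then \[ \sum_{A\in\mathcal{A}} \frac{1}{m(A)} \le \binom{n-1}{r-1}. \]
   Context: A matching is a collection of pairwise disjoint sets. $[n]=\{1,\dots,n\}$. *)

theory Defs
  imports Complex_Main "HOL-Library.Disjoint_Sets"
begin

definition matching_in :: "'a set set \<Rightarrow> 'a set set \<Rightarrow> bool" where
  "matching_in F M \<longleftrightarrow> M \<subseteq> F \<and> disjoint M"

definition mweight :: "nat \<Rightarrow> nat \<Rightarrow> nat set set \<Rightarrow> nat set \<Rightarrow> real" where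
  "mweight n r F A =
     (if \<exists>M. matching_in F M \<and> A \<in> M \<and> card M = n div r
      then real n / real r
      else real (Max {card M | M. matching_in F M \<and> A \<in> M}))"

end

theory Submission
  imports Defs "HOL-Combinatorics.Permutations"
begin

text \<open>
  Katona's cycle method. A permutation \<open>p\<close> of $[n]$ places $[n]$ on a cycle, and the images
  under \<open>p\<close> of the \<open>n\<close> arcs of \<open>r\<close> consecutive positions are \<open>r\<close>-sets. For every \<open>p\<close>, the
  arcs lying in \<open>F\<close> contribute at most \<open>r\<close> to the sum of \<open>1 / m\<close>. Averaging over all \<open>p\<close>,
  each \<open>r\<close>-set is the image of a fixed arc equally often, so
  \<open>n \<cdot> \<Sum> 1 / m \<le> r \<cdot> (n choose r) = n \<cdot> (n - 1 choose r - 1)\<close>.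

  The bound \<open>r\<close> on a cycle of length \<open>N\<close> only uses that pairwise disjoint arcs form a matching:
  an arc lying in \<open>t\<close> pairwise disjoint arcs has weight at least \<open>t\<close>, and at least \<open>N / r\<close>
  if \<open>t = N div r\<close>. If \<open>r\<close> divides \<open>N\<close>, the arcs split by their starting position modulo \<open>r\<close>
  into \<open>r\<close> families of pairwise disjoint arcs, each contributing at most \<open>1\<close>. If all \<open>N\<close> arcs
  are present, each lies in \<open>N div r\<close> disjoint arcs and contributes at most \<open>r / N\<close>.
  Otherwise the starting position of a missing arc is deleted: \<open>N div r\<close> does not change, and
  disjoint arcs of the shorter cycle stay disjoint in the longer one, so induction on \<open>N\<close> applies.
\<close>

section \<open>Disjoint arcs on a cycle\<close>

text \<open>The arcs of length \<open>r\<close> starting at positions \<open>i\<close> and \<open>j\<close> of a cycle of length \<open>N\<close>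
  are disjoint.\<close>
definition arcs_apart :: "nat \<Rightarrow> nat \<Rightarrow> nat \<Rightarrow> nat \<Rightarrow> bool" where
  "arcs_apart N r i j \<longleftrightarrow> r \<le> max i j - min i j \<and> r + (max i j - min i j) \<le> N"

lemma arcs_apart_commute: "arcs_apart N r i j \<longleftrightarrow> arcs_apart N r j i"
  by (simp add: arcs_apart_def max.commute min.commute)

lemma pairwise_arcs_apart_progression:
  assumes "q * r \<le> N"
  shows "pairwise (arcs_apart N r) ((\<lambda>j. a + j * r) ` {..<q})"
proof -
  have apart: "arcs_apart N r (a + j * r) (a + k * r)" if "j < k" "k < q" for j k
  proof -
    have "max (a + j * r) (a + k * r) - min (a + j * r) (a + k * r) = (k - j) * r"
      using that by (simp add: max_def min_def diff_mult_distrib)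
    moreover have "r \<le> (k - j) * r" using that by (simp add: Suc_le_eq)
    moreover have "Suc (k - j) \<le> q" using that by simp
    then have "r + (k - j) * r \<le> q * r" using mult_le_mono1[of "Suc (k - j)" q r] by simp
    ultimately show ?thesis using assms by (simp add: arcs_apart_def)
  qed
  show ?thesis
    unfolding pairwise_def
  proof (intro ballI impI)
    fix x y assume "x \<in> (\<lambda>j. a + j * r) ` {..<q}" "y \<in> (\<lambda>j. a + j * r) ` {..<q}" "x \<noteq> y"
    then obtain j k where "j < q" "k < q" "x = a + j * r" "y = a + k * r" "j \<noteq> k" by auto
    then consider "j < k" | "k < j" by linarith
    then show "arcs_apart N r x y"
    proof cases
      case 1
      show ?thesis using apart[OF 1 \<open>k < q\<close>] \<open>x = _\<close> \<open>y = _\<close> by simp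
    next
      case 2
      show ?thesis using apart[OF 2 \<open>j < q\<close>] \<open>x = _\<close> \<open>y = _\<close> by (subst arcs_apart_commute) simp
    qed
  qed
qed

lemma card_progression: "0 < r \<Longrightarrow> card ((\<lambda>j. a + j * r) ` {..<q}) = q"
  by (simp add: card_image inj_on_def)

section \<open>Weights of arcs on a cycle\<close>

text \<open>\<open>S\<close> is the set of starting points of the arcs present, \<open>w\<close> their weights.\<close>
definition cyclic_matching_weights :: "nat \<Rightarrow> nat \<Rightarrow> nat set \<Rightarrow> (nat \<Rightarrow> real) \<Rightarrow> bool" where
  "cyclic_matching_weights N r S w \<longleftrightarrow>
     (\<forall>T\<subseteq>S. pairwise (arcs_apart N r) T \<longrightarrow>
        (\<forall>i\<in>T. real (card T) \<le> w i \<and> (card T = N div r \<longrightarrow> real N / real r \<le> w i)))"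

lemma sum_inverse_le_card_divide:
  assumes "0 < c" and "\<forall>i\<in>K. c \<le> w i"
  shows "(\<Sum>i\<in>K. 1 / w i) \<le> real (card K) / c"
proof -
  have "(\<Sum>i\<in>K. 1 / w i) \<le> (\<Sum>i\<in>K. 1 / c)"
    using assms by (intro sum_mono divide_left_mono) auto
  then show ?thesis by simp
qed

lemma cyclic_matching_weights_sum_dvd:
  assumes "0 < r" "r dvd N" "S \<subseteq> {..<N}" and weights: "cyclic_matching_weights N r S w"
  shows "(\<Sum>i\<in>S. 1 / w i) \<le> real r"
proof -
  have N: "N = N div r * r" using assms(2) by simp
  have "finite S" using assms(3) finite_subset by blast
  then have "(\<Sum>i\<in>S. 1 / w i) = (\<Sum>c<r. \<Sum>i\<in>{i\<in>S. i mod r = c}. 1 / w i)"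
    using assms(1) by (intro sum.group[symmetric]) auto
  also have "\<dots> \<le> (\<Sum>c<r. 1)"
  proof (rule sum_mono)
    fix c
    define K where "K = {i\<in>S. i mod r = c}"
    have "K \<subseteq> (\<lambda>j. c + j * r) ` {..<N div r}"
    proof
      fix i assume "i \<in> K"
      then have "i = c + i div r * r" "i div r < N div r"
        using assms(3) less_mult_imp_div_less[of i "N div r" r] N by (auto simp: K_def)
      then show "i \<in> (\<lambda>j. c + j * r) ` {..<N div r}" by blast
    qed
    then have "pairwise (arcs_apart N r) K"
      using pairwise_arcs_apart_progression[of "N div r" r N c] pairwise_subset by fastforce
    then have "\<forall>i\<in>K. real (card K) \<le> w i"
      using weights by (auto simp: cyclic_matching_weights_def K_def)
    moreover have "finite K" using \<open>finite S\<close> by (simp add: K_def)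
    ultimately show "(\<Sum>i\<in>K. 1 / w i) \<le> 1"
      by (cases "K = {}")
        (use sum_inverse_le_card_divide[of "real (card K)" K w] in \<open>auto simp: card_gt_0_iff\<close>)
  qed
  finally show ?thesis by simp
qed

lemma cyclic_matching_weights_sum_full:
  assumes "0 < r" "r \<le> N" and weights: "cyclic_matching_weights N r {..<N} w"
  shows "(\<Sum>i<N. 1 / w i) \<le> real r"
proof -
  define q where "q = N div r"
  have "0 < q" "q * r \<le> N" using assms(1,2) by (auto simp: q_def div_greater_zero_iff)
  have "real N / real r \<le> w i" if "i < N" for i
  proof -
    \<comment> \<open>the progression of \<open>q\<close> arcs through \<open>i\<close> that starts as low as possible\<close>
    define k where "k = min (i div r) (q - 1)"
    define T where "T = (\<lambda>j. (i - k * r) + j * r) ` {..<q}"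
    have "k * r \<le> i div r * r" by (simp add: k_def)
    also have "\<dots> \<le> i" using mod_div_mult_eq[of i r] by linarith
    finally have "k * r \<le> i" .
    moreover have "k < q" using \<open>0 < q\<close> by (simp add: k_def)
    ultimately have "i \<in> T" unfolding T_def by (intro image_eqI[of _ _ k]) auto
    have "i - k * r + (q - 1) * r < N"
    proof (cases "i div r \<le> q - 1")
      case True
      then have "i - k * r + (q - 1) * r = i mod r + (q - 1) * r"
        by (simp add: k_def minus_div_mult_eq_mod[symmetric])
      also have "\<dots> < q * r" using assms(1) \<open>0 < q\<close> by (cases q) simp_all
      finally show ?thesis using \<open>q * r \<le> N\<close> by linarith
    next
      case False
      then show ?thesis using \<open>k * r \<le> i\<close> that by (simp add: k_def)
    qed
    have "T \<subseteq> {..<N}"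
    proof
      fix x assume "x \<in> T"
      then obtain j where "j < q" "x = i - k * r + j * r" by (auto simp: T_def)
      moreover have "j * r \<le> (q - 1) * r" using \<open>j < q\<close> by (intro mult_le_mono1) simp
      ultimately have "x < N" using \<open>i - k * r + (q - 1) * r < N\<close> by linarith
      then show "x \<in> {..<N}" by simp
    qed
    moreover have "pairwise (arcs_apart N r) T"
      using pairwise_arcs_apart_progression[OF \<open>q * r \<le> N\<close>] by (simp add: T_def)
    moreover have "card T = N div r" using assms(1) by (simp add: T_def card_progression q_def)
    ultimately show ?thesis using weights \<open>i \<in> T\<close> by (auto simp: cyclic_matching_weights_def)
  qed
  then have "(\<Sum>i<N. 1 / w i) \<le> real (card {..<N}) / (real N / real r)"
    using assms by (intro sum_inverse_le_card_divide) auto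
  also have "\<dots> = real r" using assms by simp
  finally show ?thesis .
qed

text \<open>\<open>skip p\<close> embeds a cycle of length \<open>M\<close> into one of length \<open>Suc M\<close>, leaving out position \<open>p\<close>.\<close>
definition skip :: "nat \<Rightarrow> nat \<Rightarrow> nat" where
  "skip p k = (if k < p then k else Suc k)"

lemma inj_skip: "inj (skip p)"
  by (simp add: inj_on_def skip_def)

lemma skip_image_vimage: "p \<notin> S \<Longrightarrow> skip p ` (skip p -` S) = S"
proof (intro equalityI subsetI)
  fix i assume "p \<notin> S" "i \<in> S"
  then have "i \<noteq> p" by blast
  then have "skip p (if i < p then i else i - 1) = i" by (auto simp: skip_def)
  then show "i \<in> skip p ` (skip p -` S)" using \<open>i \<in> S\<close> by (metis image_eqI vimageI)
qed auto

lemma skip_vimage_lessThan: "p \<le> M \<Longrightarrow> skip p -` {..<Suc M} = {..<M}"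
  by (auto simp: skip_def split: if_splits)

lemma skip_diff_bounds:
  "x \<le> y \<Longrightarrow> skip p x \<le> skip p y \<and> y - x \<le> skip p y - skip p x \<and> skip p y - skip p x \<le> Suc (y - x)"
  by (auto simp: skip_def)

lemma arcs_apart_skip_le:
  assumes "x \<le> y" "arcs_apart M r x y"
  shows "arcs_apart (Suc M) r (skip p x) (skip p y)"
proof -
  have "skip p x \<le> skip p y" "y - x \<le> skip p y - skip p x" "skip p y - skip p x \<le> Suc (y - x)"
    using skip_diff_bounds[OF assms(1)] by auto
  moreover have "r \<le> y - x" "r + (y - x) \<le> M"
    using assms by (simp_all add: arcs_apart_def max_def min_def)
  ultimately show ?thesis by (simp add: arcs_apart_def max_def min_def)
qed

lemma arcs_apart_skip: "arcs_apart M r x y \<Longrightarrow> arcs_apart (Suc M) r (skip p x) (skip p y)"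
  using arcs_apart_skip_le[of x y] arcs_apart_skip_le[of y x] arcs_apart_commute
  by (cases "x \<le> y") auto

lemma cyclic_matching_weights_skip:
  assumes "M div r = Suc M div r" and weights: "cyclic_matching_weights (Suc M) r S w"
  shows "cyclic_matching_weights M r (skip p -` S) (w \<circ> skip p)"
  unfolding cyclic_matching_weights_def
proof (intro allI impI ballI)
  fix T i assume T: "T \<subseteq> skip p -` S" "pairwise (arcs_apart M r) T" and "i \<in> T"
  have "skip p ` T \<subseteq> S" using T(1) by blast
  moreover have "pairwise (arcs_apart (Suc M) r) (skip p ` T)"
    using T(2) by (auto simp: pairwise_def inj_eq[OF inj_skip] intro: arcs_apart_skip)
  moreover have "skip p i \<in> skip p ` T" using \<open>i \<in> T\<close> by blast
  ultimately have "real (card (skip p ` T)) \<le> w (skip p i)"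
      "card (skip p ` T) = Suc M div r \<Longrightarrow> real (Suc M) / real r \<le> w (skip p i)"
    using weights unfolding cyclic_matching_weights_def by blast+
  moreover have "card (skip p ` T) = card T"
    using card_image[OF inj_on_subset[OF inj_skip subset_UNIV]] .
  moreover have "real M / real r \<le> real (Suc M) / real r" by (simp add: divide_right_mono)
  ultimately show "real (card T) \<le> (w \<circ> skip p) i \<and>
      (card T = M div r \<longrightarrow> real M / real r \<le> (w \<circ> skip p) i)"
    using assms(1) by auto
qed

lemma cyclic_matching_weights_sum_le:
  assumes "0 < r" "r \<le> N" "S \<subseteq> {..<N}" "cyclic_matching_weights N r S w"
  shows "(\<Sum>i\<in>S. 1 / w i) \<le> real r"
  using assms
proof (induction N arbitrary: S w rule: less_induct)
  case (less N)
  consider "r dvd N" | "S = {..<N}" | p where "p < N" "p \<notin> S" "\<not> r dvd N"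
    using less.prems(3) by blast
  then show ?case
  proof cases
    case 1
    with less.prems show ?thesis by (blast intro: cyclic_matching_weights_sum_dvd)
  next
    case 2
    with less.prems show ?thesis by (blast intro: cyclic_matching_weights_sum_full)
  next
    case 3
    define M where "M = N - 1"
    have "r \<noteq> N" using 3 by auto
    then have M: "N = Suc M" "r \<le> M" "M div r = Suc M div r"
      using 3 less.prems(2) div_Suc[of M r] by (auto simp: M_def dvd_eq_mod_eq_0)
    have "skip p -` S \<subseteq> {..<M}"
      using less.prems(3) 3 M(1) skip_vimage_lessThan[of p M] by auto
    moreover have "cyclic_matching_weights M r (skip p -` S) (w \<circ> skip p)"
      using cyclic_matching_weights_skip[OF M(3)] less.prems(4) M(1) by simp
    ultimately have "(\<Sum>k\<in>skip p -` S. 1 / (w \<circ> skip p) k) \<le> real r"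
      using less.IH[of M] less.prems(1) M(1,2) lessI by blast
    moreover have "(\<Sum>k\<in>skip p -` S. 1 / (w \<circ> skip p) k) = (\<Sum>i\<in>skip p ` (skip p -` S). 1 / w i)"
      by (simp only: sum.reindex[OF inj_on_subset[OF inj_skip subset_UNIV]] comp_def)
    moreover have "skip p ` (skip p -` S) = S" using 3(2) by (rule skip_image_vimage)
    ultimately show ?thesis by simp
  qed
qed

section \<open>Arcs of the cycle on $[n]$\<close>

text \<open>Position \<open>i\<close> of the cycle carries the element \<open>i mod n + 1\<close> of $[n]$.\<close>
definition arc :: "nat \<Rightarrow> nat \<Rightarrow> nat \<Rightarrow> nat set" where
  "arc n r i = (\<lambda>t. (i + t) mod n + 1) ` {..<r}"

lemma arc_subset: "0 < n \<Longrightarrow> arc n r i \<subseteq> {1..n}"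
  unfolding arc_def by (auto simp: Suc_le_eq)

lemma mod_neq_of_less_add:
  fixes a b n :: nat
  assumes "a < b" "b < a + n"
  shows "a mod n \<noteq> b mod n"
proof
  assume "a mod n = b mod n"
  then have "n dvd b - a" using assms(1) mod_eq_dvd_iff_nat[of a b n] by simp
  moreover have "0 < b - a" "b - a < n" using assms by auto
  ultimately show False by (meson nat_dvd_not_less)
qed

lemma card_arc:
  assumes "r \<le> n"
  shows "card (arc n r i) = r"
proof -
  have "inj_on (\<lambda>t. (i + t) mod n + 1) {..<r}"
  proof (rule inj_onI)
    fix t u assume "t \<in> {..<r}" "u \<in> {..<r}" "(i + t) mod n + 1 = (i + u) mod n + 1"
    then show "t = u"
      using assms mod_neq_of_less_add[of "i + t" "i + u" n] mod_neq_of_less_add[of "i + u" "i + t" n]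
      by (cases t u rule: linorder_cases) auto
  qed
  then show ?thesis unfolding arc_def by (simp add: card_image)
qed

lemma disjoint_arcs_less:
  assumes "i < j" "arcs_apart n r i j"
  shows "arc n r i \<inter> arc n r j = {}"
proof -
  have "(i + t) mod n \<noteq> (j + u) mod n" if "t < r" "u < r" for t u
    using assms that by (intro mod_neq_of_less_add) (auto simp: arcs_apart_def max_def min_def)
  then show ?thesis unfolding arc_def by auto
qed

lemma disjoint_arcs:
  assumes "arcs_apart n r i j"
  shows "arc n r i \<inter> arc n r j = {}"
proof (cases i j rule: linorder_cases)
  case equal
  then have "r = 0" using assms by (simp add: arcs_apart_def)
  then show ?thesis by (simp add: arc_def)
qed (use assms disjoint_arcs_less arcs_apart_commute in blast)+

section \<open>Matchings and weights\<close>

context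
  fixes n r :: nat and F :: "nat set set"
  assumes uniform: "\<forall>A\<in>F. A \<subseteq> {1..n} \<and> card A = r"
begin

lemma finite_uniform_family: "finite F"
  using uniform by (intro finite_subset[of F "Pow {1..n}"]) auto

lemma card_matching_mult_le:
  assumes "matching_in F M"
  shows "card M * r \<le> n"
proof -
  have "M \<subseteq> F" "disjoint M" using assms by (auto simp: matching_in_def)
  moreover have "finite A" if "A \<in> M" for A
    using that \<open>M \<subseteq> F\<close> uniform by (meson finite_atLeastAtMost finite_subset subsetD)
  ultimately have "card (\<Union>M) = (\<Sum>A\<in>M. card A)"
    by (intro card_Union_disjoint) (auto simp: disjoint_def)
  also have "\<dots> = card M * r" using \<open>M \<subseteq> F\<close> uniform by (simp add: subset_iff)
  finally have "card (\<Union>M) = card M * r" .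
  moreover have "\<Union>M \<subseteq> {1..n}" using \<open>M \<subseteq> F\<close> uniform by blast
  then have "card (\<Union>M) \<le> n" using card_mono[of "{1..n}" "\<Union>M"] by simp
  ultimately show ?thesis by simp
qed

lemma mweight_ge_card:
  assumes "1 \<le> r" "matching_in F M" "A \<in> M"
  shows "real (card M) \<le> mweight n r F A"
proof (cases "\<exists>M. matching_in F M \<and> A \<in> M \<and> card M = n div r")
  case True
  have "real (card M) * real r \<le> real n"
    using card_matching_mult_le[OF assms(2)] by (metis of_nat_le_iff of_nat_mult)
  then show ?thesis using True assms(1) by (simp add: mweight_def pos_le_divide_eq)
next
  case False
  have "{card M | M. matching_in F M \<and> A \<in> M} \<subseteq> card ` Pow F" by (auto simp: matching_in_def)
  then have "finite {card M | M. matching_in F M \<and> A \<in> M}"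
    using finite_uniform_family finite_subset by blast
  then have "card M \<le> Max {card M | M. matching_in F M \<and> A \<in> M}"
    using assms(2,3) by (intro Max_ge) auto
  then show ?thesis unfolding mweight_def if_not_P[OF False] by simp
qed

end

lemma mweight_eq_of_card:
  "matching_in F M \<Longrightarrow> A \<in> M \<Longrightarrow> card M = n div r \<Longrightarrow> mweight n r F A = real n / real r"
  unfolding mweight_def by auto

text \<open>\<open>mweight\<close> has no meaning outside \<open>F\<close>, so the summand is extended by \<open>0\<close> there.\<close>
definition inverse_mweight :: "nat \<Rightarrow> nat \<Rightarrow> nat set set \<Rightarrow> nat set \<Rightarrow> real" where
  "inverse_mweight n r F X = (if X \<in> F then 1 / mweight n r F X else 0)"

lemma sum_arcs_inverse_mweight_le:
  assumes "1 \<le> r" "r \<le> n" and uniform: "\<forall>A\<in>F. A \<subseteq> {1..n} \<and> card A = r"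
    and "p permutes {1..n}"
  shows "(\<Sum>i<n. inverse_mweight n r F (p ` arc n r i)) \<le> real r"
proof -
  define S where "S = {i\<in>{..<n}. p ` arc n r i \<in> F}"
  define w where "w i = mweight n r F (p ` arc n r i)" for i
  have "cyclic_matching_weights n r S w"
    unfolding cyclic_matching_weights_def
  proof (intro allI impI ballI)
    fix T i assume T: "T \<subseteq> S" "pairwise (arcs_apart n r) T" and "i \<in> T"
    define M where "M = (\<lambda>j. p ` arc n r j) ` T"
    have disj: "p ` arc n r j \<inter> p ` arc n r k = {}" if "j \<in> T" "k \<in> T" "j \<noteq> k" for j k
    proof -
      have "arc n r j \<inter> arc n r k = {}" using pairwiseD[OF T(2) that] by (rule disjoint_arcs)
      then show ?thesis by (simp add: image_Int[OF permutes_inj[OF assms(4)], symmetric])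
    qed
    have "arc n r j \<noteq> {}" for j using card_arc[OF assms(2), of j] assms(1) by auto
    then have "inj_on (\<lambda>j. p ` arc n r j) T"
      using disj by (metis (no_types, lifting) Int_absorb image_is_empty inj_onI)
    then have card_M: "card M = card T" by (simp add: M_def card_image)
    have "M \<subseteq> F" using T(1) by (auto simp: M_def S_def)
    moreover have "disjoint M"
      unfolding M_def by (rule pairwise_imageI) (use disj in \<open>auto simp: disjnt_def\<close>)
    ultimately have M: "matching_in F M" by (simp add: matching_in_def)
    have i: "p ` arc n r i \<in> M" using \<open>i \<in> T\<close> by (simp add: M_def)
    show "real (card T) \<le> w i \<and> (card T = n div r \<longrightarrow> real n / real r \<le> w i)"
      using mweight_ge_card[OF uniform assms(1) M i] mweight_eq_of_card[OF M i] card_M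
      by (simp add: w_def)
  qed
  then have "(\<Sum>i\<in>S. 1 / w i) \<le> real r"
    using assms(1,2) by (intro cyclic_matching_weights_sum_le) (auto simp: S_def)
  moreover have "(\<Sum>i<n. inverse_mweight n r F (p ` arc n r i)) = (\<Sum>i\<in>S. 1 / w i)"
    unfolding S_def w_def inverse_mweight_def by (rule sum.inter_filter[symmetric]) simp
  ultimately show ?thesis by simp
qed

section \<open>Averaging over all orderings\<close>

lemma exists_permutes_image_eq:
  assumes "finite U" "X \<subseteq> U" "Y \<subseteq> U" "card X = card Y"
  obtains \<sigma> where "\<sigma> permutes U" "\<sigma> ` Y = X"
proof -
  obtain f where f: "bij_betw f Y X"
    using finite_same_card_bij[of Y X] assms finite_subset by metis
  have "card (U - Y) = card (U - X)" using assms by (simp add: card_Diff_subset finite_subset)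
  then obtain g where g: "bij_betw g (U - Y) (U - X)"
    using finite_same_card_bij[of "U - Y" "U - X"] assms(1) by auto
  define \<sigma> where "\<sigma> x = (if x \<in> Y then f x else if x \<in> U then g x else x)" for x
  have Y: "bij_betw \<sigma> Y X" using f by (rule bij_betw_cong[THEN iffD1, rotated]) (simp add: \<sigma>_def)
  have "bij_betw \<sigma> (U - Y) (U - X)" using g by (rule bij_betw_cong[THEN iffD1, rotated]) (simp add: \<sigma>_def)
  then have "bij_betw \<sigma> (Y \<union> (U - Y)) (X \<union> (U - X))" using bij_betw_combine[OF Y] by blast
  then have "bij_betw \<sigma> U U" using assms(2,3) by (simp add: Un_absorb1)
  moreover have "\<sigma> x = x" if "x \<notin> U" for x using that assms(3) by (auto simp: \<sigma>_def)
  ultimately have "\<sigma> permutes U" by (rule bij_imp_permutes)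
  moreover have "\<sigma> ` Y = X" using Y by (simp add: bij_betw_def)
  ultimately show ?thesis by (rule that)
qed

lemma sum_permutes_image_eq:
  assumes "finite U" "X \<subseteq> U" "Y \<subseteq> U" "card X = card Y"
  shows "(\<Sum>p | p permutes U. h (p ` X)) = (\<Sum>p | p permutes U. h (p ` Y))"
proof -
  obtain \<sigma> where "\<sigma> permutes U" "\<sigma> ` Y = X" using exists_permutes_image_eq[OF assms] .
  have "(\<Sum>p | p permutes U. h (p ` Y)) = (\<Sum>p | p permutes U. h ((p \<circ> \<sigma>) ` Y))"
    using \<open>\<sigma> permutes U\<close> by (rule sum_permutations_compose_right)
  also have "\<dots> = (\<Sum>p | p permutes U. h (p ` X))"
    by (simp only: image_comp[symmetric] \<open>\<sigma> ` Y = X\<close>)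
  finally show ?thesis ..
qed

lemma image_permutes_subset_card:
  assumes "p permutes U" "Y \<subseteq> U"
  shows "p ` Y \<subseteq> U" "card (p ` Y) = card Y"
  using assms permutes_image[OF assms(1)] permutes_inj[OF assms(1)]
  by (auto simp: card_image inj_on_subset)

lemma bij_betw_image_permutes:
  assumes "p permutes U"
  shows "bij_betw ((`) p) {Y. Y \<subseteq> U \<and> card Y = k} {Y. Y \<subseteq> U \<and> card Y = k}"
proof (rule bij_betw_byWitness[where f' = "(`) (inv p)"])
  show "\<forall>Y\<in>{Y. Y \<subseteq> U \<and> card Y = k}. inv p ` p ` Y = Y"
    using permutes_inj[OF assms] by (simp add: image_inv_f_f)
  show "\<forall>Y\<in>{Y. Y \<subseteq> U \<and> card Y = k}. p ` inv p ` Y = Y"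
    using permutes_surj[OF assms] by (simp add: image_f_inv_f)
  show "(`) p ` {Y. Y \<subseteq> U \<and> card Y = k} \<subseteq> {Y. Y \<subseteq> U \<and> card Y = k}"
    using image_permutes_subset_card[OF assms] by auto
  show "(`) (inv p) ` {Y. Y \<subseteq> U \<and> card Y = k} \<subseteq> {Y. Y \<subseteq> U \<and> card Y = k}"
    using image_permutes_subset_card[OF permutes_inv[OF assms]] by auto
qed

text \<open>Every \<open>k\<close>-subset of \<open>U\<close> is the image of a fixed one under equally many permutations.\<close>
lemma sum_permutes_image_subsets:
  fixes h :: "'a set \<Rightarrow> real"
  assumes "finite U" "X \<subseteq> U" "card X = k"
  shows "real (card U choose k) * (\<Sum>p | p permutes U. h (p ` X))
       = fact (card U) * (\<Sum>Y | Y \<subseteq> U \<and> card Y = k. h Y)"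
proof -
  let ?P = "{p. p permutes U}" and ?R = "{Y. Y \<subseteq> U \<and> card Y = k}"
  have "(\<Sum>p\<in>?P. \<Sum>Y\<in>?R. h (p ` Y)) = (\<Sum>Y\<in>?R. \<Sum>p\<in>?P. h (p ` Y))"
    by (rule sum.swap)
  also have "\<dots> = (\<Sum>Y\<in>?R. \<Sum>p\<in>?P. h (p ` X))"
  proof (rule sum.cong[OF refl])
    fix Y assume "Y \<in> ?R"
    then show "(\<Sum>p\<in>?P. h (p ` Y)) = (\<Sum>p\<in>?P. h (p ` X))"
      using sum_permutes_image_eq[of U Y X h] assms by simp
  qed
  also have "\<dots> = real (card U choose k) * (\<Sum>p\<in>?P. h (p ` X))"
    using n_subsets[OF assms(1), of k] by simp
  finally have "real (card U choose k) * (\<Sum>p\<in>?P. h (p ` X)) = (\<Sum>p\<in>?P. \<Sum>Y\<in>?R. h (p ` Y))" ..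
  also have "\<dots> = (\<Sum>p\<in>?P. \<Sum>Y\<in>?R. h Y)"
  proof (rule sum.cong[OF refl])
    fix p assume "p \<in> ?P"
    then show "(\<Sum>Y\<in>?R. h (p ` Y)) = (\<Sum>Y\<in>?R. h Y)"
      using bij_betw_image_permutes by (intro sum.reindex_bij_betw) blast
  qed
  also have "\<dots> = fact (card U) * (\<Sum>Y\<in>?R. h Y)"
    using card_permutations[OF refl assms(1)] by simp
  finally show ?thesis .
qed

lemma sum_permutes_arc_inverse_mweight_le:
  assumes "1 \<le> r" "r \<le> n" and uniform: "\<forall>A\<in>F. A \<subseteq> {1..n} \<and> card A = r"
  shows "real n * (\<Sum>p | p permutes {1..n}. inverse_mweight n r F (p ` arc n r 0))
       \<le> fact n * real r"
proof -
  let ?P = "{p. p permutes {1..n}}"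
  have "0 < n" using assms by simp
  have "real n * (\<Sum>p\<in>?P. inverse_mweight n r F (p ` arc n r 0))
      = (\<Sum>i<n. \<Sum>p\<in>?P. inverse_mweight n r F (p ` arc n r 0))"
    by simp
  also have "\<dots> = (\<Sum>i<n. \<Sum>p\<in>?P. inverse_mweight n r F (p ` arc n r i))"
  proof (rule sum.cong[OF refl])
    fix i
    show "(\<Sum>p\<in>?P. inverse_mweight n r F (p ` arc n r 0)) = (\<Sum>p\<in>?P. inverse_mweight n r F (p ` arc n r i))"
      using sum_permutes_image_eq[of "{1..n}" "arc n r 0" "arc n r i"]
        arc_subset[OF \<open>0 < n\<close>] card_arc[OF assms(2)] by simp
  qed
  also have "\<dots> = (\<Sum>p\<in>?P. \<Sum>i<n. inverse_mweight n r F (p ` arc n r i))"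
    by (rule sum.swap)
  also have "\<dots> \<le> (\<Sum>p\<in>?P. real r)"
    using sum_arcs_inverse_mweight_le[OF assms] by (intro sum_mono) simp
  also have "\<dots> = fact n * real r"
    using card_permutations[of "{1..n}" n] by simp
  finally show ?thesis .
qed

lemma sum_inverse_mweight_subsets:
  assumes "\<forall>A\<in>F. A \<subseteq> {1..n} \<and> card A = r"
  shows "(\<Sum>Y | Y \<subseteq> {1..n} \<and> card Y = r. inverse_mweight n r F Y) = (\<Sum>A\<in>F. 1 / mweight n r F A)"
proof -
  have "{Y \<in> {Y. Y \<subseteq> {1..n} \<and> card Y = r}. Y \<in> F} = F" using assms by auto
  have "finite {Y. Y \<subseteq> {1..n} \<and> card Y = r}" by (rule finite_subset[of _ "Pow {1..n}"]) auto
  then have "(\<Sum>Y | Y \<subseteq> {1..n} \<and> card Y = r. inverse_mweight n r F Y)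
      = (\<Sum>Y\<in>{Y \<in> {Y. Y \<subseteq> {1..n} \<and> card Y = r}. Y \<in> F}. 1 / mweight n r F Y)"
    unfolding inverse_mweight_def by (rule sum.inter_filter[symmetric])
  with \<open>{Y \<in> {Y. Y \<subseteq> {1..n} \<and> card Y = r}. Y \<in> F} = F\<close> show ?thesis by simp
qed

theorem theorem5:
  fixes n r :: nat and F :: "nat set set"
  assumes "1 \<le> r" "r \<le> n"
    and "\<forall>A\<in>F. A \<subseteq> {1..n} \<and> card A = r"
  shows "(\<Sum>A\<in>F. 1 / mweight n r F A) \<le> real ((n - 1) choose (r - 1))"
proof -
  define \<Sigma> where "\<Sigma> = (\<Sum>A\<in>F. 1 / mweight n r F A)"
  define \<Phi> where "\<Phi> = (\<Sum>p | p permutes {1..n}. inverse_mweight n r F (p ` arc n r 0))"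
  have "0 < n" using assms by simp
  have average: "real (n choose r) * \<Phi> = fact n * \<Sigma>"
    using sum_permutes_image_subsets[of "{1..n}" "arc n r 0" r] arc_subset[OF \<open>0 < n\<close>]
      card_arc[OF assms(2)] sum_inverse_mweight_subsets[OF assms(3)]
    by (simp add: \<Phi>_def \<Sigma>_def)
  have "real n * \<Phi> \<le> fact n * real r"
    unfolding \<Phi>_def using sum_permutes_arc_inverse_mweight_le[OF assms] .
  have "fact n * (real n * \<Sigma>) = real (n choose r) * (real n * \<Phi>)"
    using average by (simp add: ac_simps)
  also have "\<dots> \<le> real (n choose r) * (fact n * real r)"
    using \<open>real n * \<Phi> \<le> fact n * real r\<close> by (rule mult_left_mono) simp
  finally have "fact n * (real n * \<Sigma>) \<le> fact n * (real r * real (n choose r))"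
    by (simp add: ac_simps)
  then have "real n * \<Sigma> \<le> real r * real (n choose r)" by simp
  also have "\<dots> = real n * real ((n - 1) choose (r - 1))"
    using binomial_absorption[of "r - 1" n] assms(1) by (simp flip: of_nat_mult)
  finally show ?thesis using \<open>0 < n\<close> by (simp add: \<Sigma>_def)
qed

end
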